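(* Let $(X,G)$ be a symmetric $G$-metric space and $T:X\to X$. Suppose $X$ is $T$-orbitally complete and $T$ is orbitally continuous and injective, and that there exist a non-negative real-valued function $a:X\times X\times X\to[0,\infty)$ with $a(x,y,y)=0$ for all $x,y$, and a function $h:[0,\infty)^3\to[0,\infty)$ that is upper semicontinuous, nondecreasing in each variable and satisfies $h(t,t,t)<t$ for all $t>0$, such that for all $x,y,z\in X$ with $x\neq y$, \[ G(Tx,Ty,Tz)\le h\Big(G(x,y,z),\ [G(x,y,z)G(Tx,Ty,Tz)]^{-1}G(x,Tx,Tx)G(y,Ty,Ty)G(z,Tz,Tz),\ a(x,y,z)G(Tx,y,z)G(x,Ty,z)G(x,y,Tz)\Big). \] Then for each $x\in X$ the sequence $(T^nx)$ $G$-converges to some $u_x\in X$ and $Tu_x=u_x$. If in addition $a(x,y,z)\le[G(x,y,z)G(Tx,Ty,Tz)]^{-1}$ (for all $x,y,z\in X$ with $x\ne y$), then $T$ has a unique fixed point.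
   Context: A $G$-metric space is a nonempty set $X$ with a function $G:X\times X\times X\to[0,\infty)$ such that: (G1) $G(x,y,z)=0$ if $x=y=z$; (G2) $G(x,x,y)>0$ whenever $x\neq y$; (G3) $G(x,x,y)\le G(x,y,z)$ whenever $z\neq y$; (G4) $G$ is symmetric in all three variables; (G5) $G(x,y,z)\le G(x,a,a)+G(a,y,z)$ for all $x,y,z,a\in X$. It is symmetric if $G(x,y,y)=G(x,x,y)$ for all $x,y$. A sequence $(x_n)$ $G$-converges to $x$ if $G(x,x_n,x_m)\to 0$ as $n,m\to\infty$ (equivalently $G(x_n,x,x)\to0$); it is $G$-Cauchy if for every $\varepsilon>0$ there is $N$ with $G(x_n,x_m,x_m)<\varepsilon$ for all $n,m\ge N$. For $a\in X$ let $I(a,T)=\{a,Ta,T^2a,\dots\}$. $T$ is orbitally continuous if whenever $T^{n_i}x\to x^*$ ($G$-convergence) for some $x$ and some increasing sequence $(n_i)$, then $TT^{n_i}x\to Tx^*$. $X$ is $T$-orbitally complete if for every $a\in X$, every $G$-Cauchy sequence contained in $I(a,T)$ $G$-converges in $X$. *)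

theory Defs
  imports "HOL-Analysis.Analysis"
begin

definition G_metric :: "'a set \<Rightarrow> ('a \<Rightarrow> 'a \<Rightarrow> 'a \<Rightarrow> real) \<Rightarrow> bool" where
  "G_metric X G \<longleftrightarrow> X \<noteq> {} \<and>
    (\<forall>x\<in>X. \<forall>y\<in>X. \<forall>z\<in>X. G x y z \<ge> 0) \<and>
    (\<forall>x\<in>X. G x x x = 0) \<and>
    (\<forall>x\<in>X. \<forall>y\<in>X. x \<noteq> y \<longrightarrow> G x x y > 0) \<and>
    (\<forall>x\<in>X. \<forall>y\<in>X. \<forall>z\<in>X. z \<noteq> y \<longrightarrow> G x x y \<le> G x y z) \<and>
    (\<forall>x\<in>X. \<forall>y\<in>X. \<forall>z\<in>X. G x y z = G x z y \<and> G x y z = G y x z \<and> G x y z = G y z x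
        \<and> G x y z = G z x y \<and> G x y z = G z y x) \<and>
    (\<forall>x\<in>X. \<forall>y\<in>X. \<forall>z\<in>X. \<forall>a\<in>X. G x y z \<le> G x a a + G a y z)"

definition symmetric_G :: "'a set \<Rightarrow> ('a \<Rightarrow> 'a \<Rightarrow> 'a \<Rightarrow> real) \<Rightarrow> bool" where
  "symmetric_G X G \<longleftrightarrow> (\<forall>x\<in>X. \<forall>y\<in>X. G x y y = G x x y)"

definition G_converges :: "('a \<Rightarrow> 'a \<Rightarrow> 'a \<Rightarrow> real) \<Rightarrow> (nat \<Rightarrow> 'a) \<Rightarrow> 'a \<Rightarrow> bool" where
  "G_converges G s x \<longleftrightarrow> (\<forall>e>0. \<exists>N. \<forall>n m. N \<le> n \<and> N \<le> m \<longrightarrow> G x (s n) (s m) < e)"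

definition G_Cauchy :: "('a \<Rightarrow> 'a \<Rightarrow> 'a \<Rightarrow> real) \<Rightarrow> (nat \<Rightarrow> 'a) \<Rightarrow> bool" where
  "G_Cauchy G s \<longleftrightarrow> (\<forall>e>0. \<exists>N. \<forall>n m. N \<le> n \<and> N \<le> m \<longrightarrow> G (s n) (s m) (s m) < e)"

definition orbit :: "'a \<Rightarrow> ('a \<Rightarrow> 'a) \<Rightarrow> 'a set" where
  "orbit a T = {(T ^^ n) a | n. True}"

definition orbitally_continuous :: "'a set \<Rightarrow> ('a \<Rightarrow> 'a \<Rightarrow> 'a \<Rightarrow> real) \<Rightarrow> ('a \<Rightarrow> 'a) \<Rightarrow> bool" where
  "orbitally_continuous X G T \<longleftrightarrow>
    (\<forall>x\<in>X. \<forall>x'\<in>X. \<forall>n::nat \<Rightarrow> nat. strict_mono n \<and> G_converges G (\<lambda>i. (T ^^ n i) x) x'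
       \<longrightarrow> G_converges G (\<lambda>i. T ((T ^^ n i) x)) (T x'))"

definition orbitally_complete :: "'a set \<Rightarrow> ('a \<Rightarrow> 'a \<Rightarrow> 'a \<Rightarrow> real) \<Rightarrow> ('a \<Rightarrow> 'a) \<Rightarrow> bool" where
  "orbitally_complete X G T \<longleftrightarrow>
    (\<forall>a\<in>X. \<forall>s. range s \<subseteq> orbit a T \<and> G_Cauchy G s \<longrightarrow> (\<exists>x\<in>X. G_converges G s x))"

definition usc3_nonneg :: "(real \<Rightarrow> real \<Rightarrow> real \<Rightarrow> real) \<Rightarrow> bool" where
  "usc3_nonneg h \<longleftrightarrow>
    (\<forall>p\<in>{0..}. \<forall>q\<in>{0..}. \<forall>r\<in>{0..}. \<forall>c. h p q r < c \<longrightarrow>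
       (\<exists>d>0. \<forall>p'\<in>{0..}. \<forall>q'\<in>{0..}. \<forall>r'\<in>{0..}.
          dist (p', q', r') (p, q, r) < d \<longrightarrow> h p' q' r' < c))"

definition mono3_nonneg :: "(real \<Rightarrow> real \<Rightarrow> real \<Rightarrow> real) \<Rightarrow> bool" where
  "mono3_nonneg h \<longleftrightarrow>
    (\<forall>p p' q q' r r'. 0 \<le> p \<and> p \<le> p' \<and> 0 \<le> q \<and> q \<le> q' \<and> 0 \<le> r \<and> r \<le> r'
       \<longrightarrow> h p q r \<le> h p' q' r')"

end

theory Submission
  imports Defs
begin

text \<open>
  In a symmetric G-metric space, \<open>G x y y\<close> is an ordinary metric, and putting \<open>z = y\<close> in the
  contractive condition kills the term involving \<open>a\<close>. Along an orbit the second argument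
  of \<open>h\<close> then collapses to the next step length, so step lengths decrease and, by upper
  semicontinuity of \<open>h\<close> and \<open>h t t t < t\<close>, tend to 0. A Boyd--Wong type argument on a
  minimal pair of indices at distance \<open>\<ge> \<epsilon>\<close> shows the orbit is Cauchy; its limit is fixed
  by orbital continuity, and two distinct fixed points \<open>u, v\<close> would give
  \<open>G u v v \<le> h (G u v v) 0 0 < G u v v\<close>.
\<close>

lemma dist_triple_le:
  fixes a b c a' b' c' :: real
  shows "dist (a, b, c) (a', b', c') \<le> \<bar>a - a'\<bar> + \<bar>b - b'\<bar> + \<bar>c - c'\<bar>"
proof -
  have "dist (b, c) (b', c') \<le> \<bar>b - b'\<bar> + \<bar>c - c'\<bar>"
    using sqrt_sum_squares_le_sum_abs[of "dist b b'" "dist c c'"]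
    by (simp add: dist_Pair_Pair dist_real_def)
  moreover have "dist (a, b, c) (a', b', c') \<le> \<bar>dist a a'\<bar> + \<bar>dist (b, c) (b', c')\<bar>"
    using sqrt_sum_squares_le_sum_abs[of "dist a a'" "dist (b,c) (b',c')"]
    by (simp add: dist_Pair_Pair)
  ultimately show ?thesis by (simp add: dist_real_def)
qed

lemma usc3_nonneg_diagonal:
  assumes "usc3_nonneg h" "0 \<le> t" "h t t t < c"
  obtains e where "e > 0" "\<And>s. 0 \<le> s \<Longrightarrow> \<bar>s - t\<bar> < e \<Longrightarrow> h s s s < c"
proof -
  obtain d where d: "d > 0" "\<forall>p'\<in>{0..}. \<forall>q'\<in>{0..}. \<forall>r'\<in>{0..}.
      dist (p', q', r') (t, t, t) < d \<longrightarrow> h p' q' r' < c"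
    using assms unfolding usc3_nonneg_def by (meson atLeast_iff)
  show ?thesis
  proof (rule that[of "d / 3"])
    fix s :: real
    assume "0 \<le> s" "\<bar>s - t\<bar> < d / 3"
    moreover have "dist (s, s, s) (t, t, t) < d"
      using dist_triple_le[of s s s t t t] \<open>\<bar>s - t\<bar> < d / 3\<close> by linarith
    ultimately show "h s s s < c" using d(2) by simp
  qed (use d in simp)
qed

lemma decseq_usc3_bound_tendsto_0:
  fixes d :: "nat \<Rightarrow> real"
  assumes h_usc: "usc3_nonneg h" and h_lt: "\<And>t. t > 0 \<Longrightarrow> h t t t < t"
    and d_nonneg: "\<And>n. 0 \<le> d n" and "decseq d"
    and d_step: "\<And>n. 0 < d n \<Longrightarrow> d (Suc n) \<le> h (d n) (d n) (d n)"
  shows "d \<longlonglongrightarrow> 0"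
proof -
  obtain L where L: "d \<longlonglongrightarrow> L" "\<And>n. L \<le> d n"
    using decseq_convergent[OF \<open>decseq d\<close>, of 0] d_nonneg by blast
  have "L \<le> 0"
  proof (rule ccontr)
    assume "\<not> L \<le> 0"
    then have "L > 0" by simp
    then obtain e where e: "e > 0" "\<And>s. 0 \<le> s \<Longrightarrow> \<bar>s - L\<bar> < e \<Longrightarrow> h s s s < L"
      using usc3_nonneg_diagonal[OF h_usc, of L L] h_lt by auto
    obtain n where "\<bar>d n - L\<bar> < e" using LIMSEQ_D[OF L(1) e(1)] by auto
    then have "d (Suc n) < L"
      using d_step[of n] e(2)[of "d n"] L(2)[of n] \<open>L > 0\<close> d_nonneg[of n] by force
    then show False using L(2)[of "Suc n"] by simp
  qed
  moreover have "0 \<le> L" using L(1) d_nonneg by (intro LIMSEQ_le_const) auto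
  ultimately show ?thesis using L(1) by simp
qed

lemma first_exceeding_index:
  fixes p :: "nat \<Rightarrow> nat \<Rightarrow> real"
  assumes tri: "\<And>i j k. p i k \<le> p i j + p j k"
    and step: "\<And>k. N \<le> k \<Longrightarrow> p k (Suc k) < \<eta>" and "\<eta> \<le> \<epsilon>"
    and "N \<le> n" "n < m" "\<epsilon> \<le> p n m"
  shows "\<exists>m'. n < m' \<and> \<epsilon> \<le> p n m' \<and> p n m' < \<epsilon> + \<eta>"
  using \<open>n < m\<close> \<open>\<epsilon> \<le> p n m\<close>
proof (induction m)
  case (Suc m)
  consider "n < m" "\<epsilon> \<le> p n m" | "n < m" "p n m < \<epsilon>" | "m = n"
    using Suc.prems by linarith
  then show ?case
  proof cases
    case 1
    then show ?thesis using Suc.IH by blast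
  next
    case 2
    then have "p n (Suc m) < \<epsilon> + \<eta>"
      using tri[of n "Suc m" m] step[of m] \<open>N \<le> n\<close> by linarith
    then show ?thesis using Suc.prems by blast
  next
    case 3
    then show ?thesis using Suc.prems step[of n] \<open>N \<le> n\<close> \<open>\<eta> \<le> \<epsilon>\<close> by simp
  qed
qed simp

locale sym_G_metric_space =
  fixes X :: "'a set" and G :: "'a \<Rightarrow> 'a \<Rightarrow> 'a \<Rightarrow> real"
  assumes G_metric: "G_metric X G" and symmetric: "symmetric_G X G"
begin

lemma G_dist_nonneg: "x \<in> X \<Longrightarrow> y \<in> X \<Longrightarrow> 0 \<le> G x y y"
  using G_metric unfolding G_metric_def by auto

lemma G_dist_self: "x \<in> X \<Longrightarrow> G x x x = 0"
  using G_metric unfolding G_metric_def by auto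

lemma G_dist_pos: "x \<in> X \<Longrightarrow> y \<in> X \<Longrightarrow> x \<noteq> y \<Longrightarrow> 0 < G x y y"
  using G_metric symmetric unfolding G_metric_def symmetric_G_def by metis

lemma G_dist_commute: "x \<in> X \<Longrightarrow> y \<in> X \<Longrightarrow> G x y y = G y x x"
  using G_metric symmetric unfolding G_metric_def symmetric_G_def by metis

lemma G_dist_triangle: "x \<in> X \<Longrightarrow> y \<in> X \<Longrightarrow> z \<in> X \<Longrightarrow> G x z z \<le> G x y y + G y z z"
  using G_metric unfolding G_metric_def by blast

lemma G_converges_Suc_unique:
  assumes "u \<in> X" "v \<in> X" "\<And>n. s n \<in> X"
    and "G_converges G s u" "G_converges G (\<lambda>n. s (Suc n)) v"
  shows "u = v"
proof (rule ccontr)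
  assume "u \<noteq> v"
  define e where "e = G u v v / 2"
  have "e > 0" using G_dist_pos[OF assms(1,2) \<open>u \<noteq> v\<close>] unfolding e_def by simp
  obtain N1 where N1: "\<And>n m. N1 \<le> n \<and> N1 \<le> m \<Longrightarrow> G u (s n) (s m) < e"
    using assms(4) \<open>e > 0\<close> unfolding G_converges_def by blast
  obtain N2 where N2: "\<And>n m. N2 \<le> n \<and> N2 \<le> m \<Longrightarrow> G v (s (Suc n)) (s (Suc m)) < e"
    using assms(5) \<open>e > 0\<close> unfolding G_converges_def by blast
  define n where "n = Suc (N1 + N2)"
  have "G u v v \<le> G u (s n) (s n) + G v (s n) (s n)"
    using G_dist_triangle[OF assms(1) assms(3) assms(2)] G_dist_commute[OF assms(2,3)] by simp
  also have "\<dots> < 2 * e"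
    using N1[of n n] N2[of "n - 1" "n - 1"] unfolding n_def by simp
  finally show False unfolding e_def by simp
qed

end

locale G_contraction = sym_G_metric_space X G
  for X :: "'a set" and G :: "'a \<Rightarrow> 'a \<Rightarrow> 'a \<Rightarrow> real" +
  fixes T :: "'a \<Rightarrow> 'a" and a :: "'a \<Rightarrow> 'a \<Rightarrow> 'a \<Rightarrow> real" and h :: "real \<Rightarrow> real \<Rightarrow> real \<Rightarrow> real"
  assumes T_maps: "\<forall>x\<in>X. T x \<in> X"
    and a_zero: "\<forall>x\<in>X. \<forall>y\<in>X. a x y y = 0"
    and h_usc: "usc3_nonneg h"
    and h_mono: "mono3_nonneg h"
    and h_lt: "\<forall>t>0. h t t t < t"
    and contr: "\<forall>x\<in>X. \<forall>y\<in>X. \<forall>z\<in>X. x \<noteq> y \<longrightarrow>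
        G (T x) (T y) (T z) \<le>
          h (G x y z)
            (G x (T x) (T x) * G y (T y) (T y) * G z (T z) (T z) / (G x y z * G (T x) (T y) (T z)))
            (a x y z * G (T x) y z * G x (T y) z * G x y (T z))"
begin

lemma h_monoD:
  "0 \<le> p \<Longrightarrow> p \<le> p' \<Longrightarrow> 0 \<le> q \<Longrightarrow> q \<le> q' \<Longrightarrow> 0 \<le> r \<Longrightarrow> r \<le> r' \<Longrightarrow> h p q r \<le> h p' q' r'"
  using h_mono unfolding mono3_nonneg_def by blast

lemma contraction_pair:
  assumes "x \<in> X" "y \<in> X" "x \<noteq> y"
  shows "G (T x) (T y) (T y) \<le> h (G x y y)
     (G x (T x) (T x) * G y (T y) (T y) * G y (T y) (T y) / (G x y y * G (T x) (T y) (T y))) 0"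
  using contr[rule_format, OF assms(1,2,2,3)] a_zero assms by simp

lemma fixed_point_unique:
  assumes "u \<in> X" "v \<in> X" "T u = u" "T v = v"
  shows "u = v"
proof (rule ccontr)
  assume "u \<noteq> v"
  let ?t = "G u v v"
  have t: "?t > 0" using G_dist_pos assms \<open>u \<noteq> v\<close> by blast
  have "?t \<le> h ?t 0 0" using contraction_pair[OF assms(1,2) \<open>u \<noteq> v\<close>] assms G_dist_self by simp
  also have "\<dots> \<le> h ?t ?t ?t" using t by (intro h_monoD) auto
  also have "\<dots> < ?t" using h_lt t by blast
  finally show False by simp
qed

lemma orbit_in: "x \<in> X \<Longrightarrow> (T ^^ n) x \<in> X"
  by (induction n) (auto simp: T_maps)

lemma contraction_step:
  assumes "x \<in> X" "x \<noteq> T x"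
  shows "G (T x) (T (T x)) (T (T x)) \<le> h (G x (T x) (T x)) (G (T x) (T (T x)) (T (T x))) 0"
proof -
  let ?d = "G x (T x) (T x)" and ?d' = "G (T x) (T (T x)) (T (T x))"
  have "?d > 0" using G_dist_pos assms T_maps by blast
  then have "?d * ?d' * ?d' / (?d * ?d') = ?d'"
    by (cases "?d' = 0") (simp_all add: field_simps)
  then show ?thesis using contraction_pair[OF assms(1) _ assms(2)] assms(1) T_maps by simp
qed

lemma step_dist_decreasing:
  assumes "x \<in> X"
  shows "G (T x) (T (T x)) (T (T x)) \<le> G x (T x) (T x)"
proof (cases "x = T x")
  case False
  let ?d = "G x (T x) (T x)" and ?d' = "G (T x) (T (T x)) (T (T x))"
  have "?d > 0" "?d' \<ge> 0" using G_dist_pos G_dist_nonneg assms T_maps False by blast+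
  show ?thesis
  proof (rule ccontr)
    assume "\<not> ?d' \<le> ?d"
    then have "h ?d ?d' 0 \<le> h ?d' ?d' ?d'"
      using \<open>?d > 0\<close> by (intro h_monoD) auto
    also have "\<dots> < ?d'" using h_lt \<open>?d > 0\<close> \<open>\<not> ?d' \<le> ?d\<close> by auto
    finally show False using contraction_step[OF assms False] by simp
  qed
qed (metis G_dist_self T_maps assms order_refl)

lemma step_dist_le_h:
  assumes "x \<in> X" "0 < G x (T x) (T x)"
  shows "G (T x) (T (T x)) (T (T x)) \<le> h (G x (T x) (T x)) (G x (T x) (T x)) (G x (T x) (T x))"
proof -
  have "x \<noteq> T x" using assms G_dist_self by auto
  have "h (G x (T x) (T x)) (G (T x) (T (T x)) (T (T x))) 0
      \<le> h (G x (T x) (T x)) (G x (T x) (T x)) (G x (T x) (T x))"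
    using step_dist_decreasing[OF assms(1)] G_dist_nonneg assms T_maps by (intro h_monoD) auto
  then show ?thesis using contraction_step[OF assms(1) \<open>x \<noteq> T x\<close>] by linarith
qed

lemma orbit_step_tendsto_0:
  assumes "x \<in> X"
  shows "(\<lambda>n. G ((T ^^ n) x) ((T ^^ Suc n) x) ((T ^^ Suc n) x)) \<longlonglongrightarrow> 0"
proof (rule decseq_usc3_bound_tendsto_0[OF h_usc])
  show "decseq (\<lambda>n. G ((T ^^ n) x) ((T ^^ Suc n) x) ((T ^^ Suc n) x))"
    using step_dist_decreasing orbit_in assms by (intro decseq_SucI) simp
qed (use h_lt G_dist_nonneg orbit_in assms step_dist_le_h T_maps in auto)

lemma contraction_pair_le_h_diag:
  assumes "x \<in> X" "y \<in> X" "x \<noteq> y"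
    and "G x (T x) (T x) \<le> G x y y" "G y (T y) (T y) \<le> G x y y"
    and "G y (T y) (T y) \<le> G (T x) (T y) (T y)"
  shows "G (T x) (T y) (T y) \<le> h (G x y y) (G x y y) (G x y y)"
proof -
  let ?t = "G x y y" and ?t' = "G (T x) (T y) (T y)"
  let ?dx = "G x (T x) (T x)" and ?dy = "G y (T y) (T y)"
  have t: "?t > 0" using G_dist_pos assms by blast
  have nonneg: "0 \<le> ?dx" "0 \<le> ?dy" "0 \<le> ?t'" using G_dist_nonneg assms T_maps by auto
  have "?dx * ?dy * ?dy \<le> ?t * ?t * ?t'"
    using assms(4-6) nonneg by (intro mult_mono) auto
  then have "?dx * ?dy * ?dy / (?t * ?t') \<le> ?t"
    using t nonneg by (cases "?t' = 0") (simp_all add: divide_le_eq mult.assoc)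
  then have "h ?t (?dx * ?dy * ?dy / (?t * ?t')) 0 \<le> h ?t ?t ?t"
    using t nonneg by (intro h_monoD) auto
  then show ?thesis using contraction_pair[OF assms(1-3)] by linarith
qed

lemma orbit_G_Cauchy:
  assumes x: "x \<in> X"
  shows "G_Cauchy G (\<lambda>n. (T ^^ n) x)"
proof (rule ccontr)
  define p where "p i j = G ((T ^^ i) x) ((T ^^ j) x) ((T ^^ j) x)" for i j
  have p_tri: "p i k \<le> p i j + p j k" for i j k
    unfolding p_def using G_dist_triangle orbit_in x by blast
  have p_commute: "p i j = p j i" for i j
    unfolding p_def using G_dist_commute orbit_in x by blast
  assume "\<not> G_Cauchy G (\<lambda>n. (T ^^ n) x)"
  then obtain \<epsilon> where "\<epsilon> > 0" and far: "\<And>N. \<exists>n m. N \<le> n \<and> N \<le> m \<and> \<epsilon> \<le> p n m"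
    unfolding G_Cauchy_def p_def by (auto simp: not_less)
  have far_ordered: "\<exists>n m. N \<le> n \<and> n < m \<and> \<epsilon> \<le> p n m" for N
  proof -
    obtain n m where "N \<le> n" "N \<le> m" "\<epsilon> \<le> p n m" using far by blast
    moreover have "n \<noteq> m" using \<open>\<epsilon> \<le> p n m\<close> \<open>\<epsilon> > 0\<close> G_dist_self orbit_in x by (auto simp: p_def)
    ultimately show ?thesis using p_commute by (metis linorder_neqE_nat)
  qed
  define c where "c = (h \<epsilon> \<epsilon> \<epsilon> + \<epsilon>) / 2"
  have "h \<epsilon> \<epsilon> \<epsilon> < c" "c < \<epsilon>" using h_lt \<open>\<epsilon> > 0\<close> unfolding c_def by auto
  then obtain e where "e > 0" and e: "\<And>t. 0 \<le> t \<Longrightarrow> \<bar>t - \<epsilon>\<bar> < e \<Longrightarrow> h t t t < c"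
    using usc3_nonneg_diagonal[OF h_usc] \<open>\<epsilon> > 0\<close> by (metis less_imp_le)
  define \<eta> where "\<eta> = min (\<epsilon> / 4) (min e ((\<epsilon> - c) / 3))"
  have "\<eta> > 0" unfolding \<eta>_def using \<open>\<epsilon> > 0\<close> \<open>e > 0\<close> \<open>c < \<epsilon>\<close> by simp
  have \<eta>: "\<eta> \<le> \<epsilon> / 4" "\<eta> \<le> e" "\<eta> \<le> (\<epsilon> - c) / 3"
    unfolding \<eta>_def
    by (rule min.cobounded1 order.trans[OF min.cobounded2 min.cobounded1]
        order.trans[OF min.cobounded2 min.cobounded2])+
  obtain N where N: "\<And>k. N \<le> k \<Longrightarrow> p k (Suc k) < \<eta>"
    using LIMSEQ_D[OF orbit_step_tendsto_0[OF x] \<open>\<eta> > 0\<close>] unfolding p_def by (force simp: abs_less_iff)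
  obtain n m0 where "N \<le> n" "n < m0" "\<epsilon> \<le> p n m0" using far_ordered by blast
  then obtain m where "n < m" "\<epsilon> \<le> p n m" "p n m < \<epsilon> + \<eta>"
    using first_exceeding_index[of p N \<eta> \<epsilon> n m0] p_tri N \<eta>(1) \<open>\<epsilon> > 0\<close> by auto
  have dn: "p n (Suc n) < \<eta>" and dm: "p m (Suc m) < \<eta>" using N \<open>N \<le> n\<close> \<open>n < m\<close> by auto
  have sum: "p n m \<le> p n (Suc n) + p (Suc n) (Suc m) + p m (Suc m)"
    using p_tri[of n m "Suc n"] p_tri[of "Suc n" m "Suc m"] p_commute[of m "Suc m"] by linarith
  have "(T ^^ n) x \<noteq> (T ^^ m) x"
    using \<open>\<epsilon> \<le> p n m\<close> \<open>\<epsilon> > 0\<close> G_dist_self orbit_in x by (auto simp: p_def)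
  moreover have "p n (Suc n) \<le> p n m" "p m (Suc m) \<le> p n m" "p m (Suc m) \<le> p (Suc n) (Suc m)"
    using dn dm sum \<eta>(1) \<open>\<epsilon> \<le> p n m\<close> \<open>\<epsilon> > 0\<close> by linarith+
  ultimately have "p (Suc n) (Suc m) \<le> h (p n m) (p n m) (p n m)"
    using contraction_pair_le_h_diag[of "(T ^^ n) x" "(T ^^ m) x"] orbit_in x p_commute[of m "Suc m"]
    unfolding p_def by simp
  also have "\<dots> < c"
    using e[of "p n m"] \<open>\<epsilon> \<le> p n m\<close> \<open>p n m < \<epsilon> + \<eta>\<close> \<open>\<epsilon> > 0\<close> \<eta>(2) by simp
  finally show False
    using sum dn dm \<eta>(3) \<open>\<epsilon> \<le> p n m\<close> \<open>c < \<epsilon>\<close> by argo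
qed

lemma orbit_converges_to_fixed_point:
  assumes x: "x \<in> X"
    and complete: "orbitally_complete X G T" and continuous: "orbitally_continuous X G T"
  shows "\<exists>u\<in>X. G_converges G (\<lambda>n. (T ^^ n) x) u \<and> T u = u"
proof -
  have "range (\<lambda>n. (T ^^ n) x) \<subseteq> orbit x T" unfolding orbit_def by auto
  then obtain u where "u \<in> X" and u: "G_converges G (\<lambda>n. (T ^^ n) x) u"
    using complete x orbit_G_Cauchy[OF x] unfolding orbitally_complete_def by blast
  have "G_converges G (\<lambda>n. T ((T ^^ id n) x)) (T u)"
    using continuous x \<open>u \<in> X\<close> u strict_mono_id unfolding orbitally_continuous_def id_apply by blast
  then have "G_converges G (\<lambda>n. (T ^^ Suc n) x) (T u)" by simp
  then have "u = T u"
    using G_converges_Suc_unique[OF \<open>u \<in> X\<close> _ _ u] T_maps \<open>u \<in> X\<close> orbit_in x by blast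
  then show ?thesis using \<open>u \<in> X\<close> u by auto
qed

end

theorem theorem3:
  fixes X :: "'a set" and G :: "'a \<Rightarrow> 'a \<Rightarrow> 'a \<Rightarrow> real" and T :: "'a \<Rightarrow> 'a"
    and a :: "'a \<Rightarrow> 'a \<Rightarrow> 'a \<Rightarrow> real" and h :: "real \<Rightarrow> real \<Rightarrow> real \<Rightarrow> real"
  assumes GX: "G_metric X G" and symG: "symmetric_G X G"
    and TX: "\<forall>x\<in>X. T x \<in> X"
    and compl: "orbitally_complete X G T"
    and cont: "orbitally_continuous X G T"
    and inj: "inj_on T X"
    and a_nonneg: "\<forall>x\<in>X. \<forall>y\<in>X. \<forall>z\<in>X. a x y z \<ge> 0"
    and a_zero: "\<forall>x\<in>X. \<forall>y\<in>X. a x y y = 0"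
    and h_nonneg: "\<forall>p\<ge>0. \<forall>q\<ge>0. \<forall>r\<ge>0. h p q r \<ge> 0"
    and h_usc: "usc3_nonneg h"
    and h_mono: "mono3_nonneg h"
    and h_lt: "\<forall>t>0. h t t t < t"
    and contr: "\<forall>x\<in>X. \<forall>y\<in>X. \<forall>z\<in>X. x \<noteq> y \<longrightarrow>
        G (T x) (T y) (T z) \<le>
          h (G x y z)
            (G x (T x) (T x) * G y (T y) (T y) * G z (T z) (T z) / (G x y z * G (T x) (T y) (T z)))
            (a x y z * G (T x) y z * G x (T y) z * G x y (T z))"
  shows "(\<forall>x\<in>X. \<exists>u\<in>X. G_converges G (\<lambda>n. (T ^^ n) x) u \<and> T u = u) \<and>
         ((\<forall>x\<in>X. \<forall>y\<in>X. \<forall>z\<in>X. x \<noteq> y \<longrightarrow> a x y z \<le> 1 / (G x y z * G (T x) (T y) (T z)))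
            \<longrightarrow> (\<exists>!u. u \<in> X \<and> T u = u))"
proof -
  interpret G_contraction X G T a h
    using GX symG TX a_zero h_usc h_mono h_lt contr by unfold_locales
  have fixed: "\<forall>x\<in>X. \<exists>u\<in>X. G_converges G (\<lambda>n. (T ^^ n) x) u \<and> T u = u"
    using orbit_converges_to_fixed_point compl cont by blast
  have "X \<noteq> {}" using GX unfolding G_metric_def by (elim conjE)
  then obtain x where "x \<in> X" by blast
  then have "\<exists>!u. u \<in> X \<and> T u = u" using fixed fixed_point_unique by blast
  with fixed show ?thesis by blast
qed

end
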